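(* Let $(X,d)$ be a metric space such that $d(v,v')\le \pi/2$ for all $v,v'\in X$, and let $T\colon X\to X$ be a mapping. Then: (i) If $T$ is firmly vicinal, then $T$ is vicinal; if moreover $d(v,v')<\pi/2$ for all $v,v'\in X$, then $T$ is firmly spherically nonspreading. (ii) If $T$ is firmly vicinal and $\mathrm{Fix}(T)\neq\emptyset$, then $\cos d(Tx,x)\,\cos d(Tx,y)\ge \cos d(x,y)$ for all $x\in X$ and $y\in \mathrm{Fix}(T)$. (iii) If $T$ is vicinal and $\mathrm{Fix}(T)\ne\emptyset$, then $T$ is quasi-nonexpansive. (iv) If $d(v,v')<\pi/2$ for all $v,v'\in X$, $T$ is firmly vicinal and $\mathrm{Fix}(T)\neq\emptyset$, then $T$ is asymptotically regular.
   Context: $\mathrm{Fix}(T)=\{u\in X: Tu=u\}$. For $z\in X$ put $C_z=\cos d(Tz,z)$. $T$ is called vicinal if for all $x,y\in X$: $\bigl(C_x^2(1+C_y^2)+C_y^2(1+C_x^2)\bigr)\cos d(Tx,Ty)\ge C_x^2(1+C_y^2)\cos d(Tx,y)+C_y^2(1+C_x^2)\cos d(Ty,x)$. $T$ is called firmly vicinal if for all $x,y\in X$: $\bigl(C_x^2(1+C_y^2)C_y+C_y^2(1+C_x^2)C_x\bigr)\cos d(Tx,Ty)\ge C_x^2(1+C_y^2)\cos d(Tx,y)+C_y^2(1+C_x^2)\cos d(Ty,x)$. $T$ is firmly spherically nonspreading if $(C_x+C_y)\cos^2 d(Tx,Ty)\ge 2\cos d(Tx,y)\cos d(Ty,x)$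 for all $x,y\in X$. $T$ is quasi-nonexpansive if $\mathrm{Fix}(T)\neq\emptyset$ and $d(Tx,y)\le d(x,y)$ for all $x\in X$, $y\in\mathrm{Fix}(T)$. $T$ is asymptotically regular if $\lim_{n\to\infty} d(T^{n+1}x,T^nx)=0$ for every $x\in X$. *)

theory Defs
  imports "HOL-Analysis.Analysis"
begin

definition Fix :: "('a \<Rightarrow> 'a) \<Rightarrow> 'a set" where
  "Fix T = {u. T u = u}"

definition Cd :: "('a::metric_space \<Rightarrow> 'a) \<Rightarrow> 'a \<Rightarrow> real" where
  "Cd T z = cos (dist (T z) z)"

definition vicinal :: "('a::metric_space \<Rightarrow> 'a) \<Rightarrow> bool" where
  "vicinal T \<longleftrightarrow> (\<forall>x y.
     ((Cd T x)^2 * (1 + (Cd T y)^2) + (Cd T y)^2 * (1 + (Cd T x)^2)) * cos (dist (T x) (T y))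
     \<ge> (Cd T x)^2 * (1 + (Cd T y)^2) * cos (dist (T x) y)
       + (Cd T y)^2 * (1 + (Cd T x)^2) * cos (dist (T y) x))"

definition firmly_vicinal :: "('a::metric_space \<Rightarrow> 'a) \<Rightarrow> bool" where
  "firmly_vicinal T \<longleftrightarrow> (\<forall>x y.
     ((Cd T x)^2 * (1 + (Cd T y)^2) * Cd T y + (Cd T y)^2 * (1 + (Cd T x)^2) * Cd T x)
       * cos (dist (T x) (T y))
     \<ge> (Cd T x)^2 * (1 + (Cd T y)^2) * cos (dist (T x) y)
       + (Cd T y)^2 * (1 + (Cd T x)^2) * cos (dist (T y) x))"

definition firmly_spherically_nonspreading :: "('a::metric_space \<Rightarrow> 'a) \<Rightarrow> bool" where
  "firmly_spherically_nonspreading T \<longleftrightarrow> (\<forall>x y.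
     (Cd T x + Cd T y) * (cos (dist (T x) (T y)))^2
     \<ge> 2 * cos (dist (T x) y) * cos (dist (T y) x))"

definition quasi_nonexpansive :: "('a::metric_space \<Rightarrow> 'a) \<Rightarrow> bool" where
  "quasi_nonexpansive T \<longleftrightarrow> Fix T \<noteq> {} \<and>
     (\<forall>x y. y \<in> Fix T \<longrightarrow> dist (T x) y \<le> dist x y)"

definition asymptotically_regular :: "('a::metric_space \<Rightarrow> 'a) \<Rightarrow> bool" where
  "asymptotically_regular T \<longleftrightarrow>
     (\<forall>x. (\<lambda>n. dist ((T ^^ Suc n) x) ((T ^^ n) x)) \<longlonglongrightarrow> 0)"

end

theory Submission
  imports Defs
begin

text \<open>
  With \<open>a = C\<^sub>x\<close>, \<open>b = C\<^sub>y\<close> and weights \<open>A = a\<^sup>2(1 + b\<^sup>2)\<close>, \<open>B = b\<^sup>2(1 + a\<^sup>2)\<close>, the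
  firmly vicinal inequality reads \<open>(A b + B a) cos d(Tx,Ty) \<ge> A p + B q\<close> with
  \<open>p = cos d(Tx,y)\<close>, \<open>q = cos d(Ty,x)\<close>. Since all cosines
  are nonnegative and \<open>a, b \<le> 1\<close>, weakening \<open>b, a\<close> to \<open>1\<close> gives vicinality, while AM-GM on
  \<open>A p + B q\<close> together with \<open>(A b + B a)\<^sup>2 \<le> 2 (a + b) A B\<close> gives the spherical
  nonspreading inequality. At a fixed point \<open>y\<close> we have \<open>C\<^sub>y = 1\<close>, and the two inequalities
  collapse to \<open>cos d(Tx,x) cos d(Tx,y) \<ge> cos d(x,y)\<close>, resp. \<open>cos d(Tx,y) \<ge> cos d(x,y)\<close>.
  Along an orbit the first one makes \<open>cos d(T\<^sup>nx, y)\<close> increase to a positive limit, so the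
  factors \<open>cos d(T\<^sup>n\<^sup>+\<^sup>1x, T\<^sup>nx)\<close> tend to \<open>1\<close>.
\<close>

lemma weighted_ineq_weaken:
  fixes A B a b c p q :: real
  assumes "0 \<le> A" "0 \<le> B" "a \<le> 1" "b \<le> 1" "0 \<le> c"
    and "(A * b + B * a) * c \<ge> A * p + B * q"
  shows "(A + B) * c \<ge> A * p + B * q"
proof -
  have "A * b + B * a \<le> A + B"
    using assms by (intro add_mono) (simp_all add: mult_left_le)
  then have "(A * b + B * a) * c \<le> (A + B) * c"
    using \<open>0 \<le> c\<close> by (rule mult_right_mono)
  with assms(6) show ?thesis by linarith
qed

lemma firmly_vicinal_weight_bound:
  fixes a b :: real
  assumes "0 < a" "a \<le> 1" "0 < b" "b \<le> 1"
  shows "(a^2 * (1 + b^2) * b + b^2 * (1 + a^2) * a)^2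
           \<le> 2 * (a + b) * (a^2 * (1 + b^2)) * (b^2 * (1 + a^2))"
proof -
  have "(1 + a*b)^2 \<le> (1 + a^2) * (1 + b^2)"
    using zero_le_power2[of "a - b"] by (simp add: power2_eq_square algebra_simps)
  moreover have "(a + b) * (1 + a*b)^2 \<le> 2 * (1 + a*b)^2"
    using assms by (intro mult_right_mono) auto
  ultimately have "(a + b) * (1 + a*b)^2 \<le> 2 * ((1 + a^2) * (1 + b^2))"
    by linarith
  then have "(a*b)^2 * (a + b) * ((a + b) * (1 + a*b)^2)
               \<le> (a*b)^2 * (a + b) * (2 * ((1 + a^2) * (1 + b^2)))"
    using assms by (intro mult_left_mono) auto
  then show ?thesis
    by (simp add: power2_eq_square algebra_simps)
qed

lemma weighted_ineq_imp_nonspreading_ineq: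
  fixes a b c p q :: real
  assumes "0 < a" "a \<le> 1" "0 < b" "b \<le> 1" "0 \<le> p" "0 \<le> q"
    and h: "(a^2 * (1 + b^2) * b + b^2 * (1 + a^2) * a) * c
              \<ge> a^2 * (1 + b^2) * p + b^2 * (1 + a^2) * q"
  shows "(a + b) * c^2 \<ge> 2 * p * q"
proof -
  define A where "A = a^2 * (1 + b^2)"
  define B where "B = b^2 * (1 + a^2)"
  define D where "D = A * b + B * a"
  have "A > 0" "B > 0"
    using assms by (simp_all add: A_def B_def add_pos_nonneg)
  then have "D > 0"
    using assms by (simp add: D_def add_pos_pos)
  have "D * c \<ge> A * p + B * q"
    using h by (simp add: A_def B_def D_def)
  moreover have "A * p + B * q \<ge> 0"
    using \<open>A > 0\<close> \<open>B > 0\<close> assms by simp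
  ultimately have "(D * c)^2 \<ge> (A * p + B * q)^2"
    by (intro power_mono) auto
  moreover have "(A * p + B * q)^2 \<ge> 4 * A * B * p * q"
    using zero_le_power2[of "A * p - B * q"] by (simp add: power2_eq_square algebra_simps)
  ultimately have "D^2 * c^2 \<ge> 4 * A * B * p * q"
    by (simp add: power_mult_distrib)
  then have "(a + b) * (D^2 * c^2) \<ge> (a + b) * (4 * A * B * p * q)"
    using assms by (intro mult_left_mono) auto
  then have "D^2 * ((a + b) * c^2) \<ge> (2 * (a + b) * A * B) * (2 * p * q)"
    by (simp add: algebra_simps)
  moreover have "2 * (a + b) * A * B * (2 * p * q) \<ge> D^2 * (2 * p * q)"
    using firmly_vicinal_weight_bound[OF assms(1-4)] assms
    by (intro mult_right_mono) (simp_all add: A_def B_def D_def)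
  ultimately have "D^2 * (2 * p * q) \<le> D^2 * ((a + b) * c^2)"
    by linarith
  then show ?thesis
    using \<open>D > 0\<close> by (simp add: mult_le_cancel_left)
qed

lemma cos_dist_nonneg:
  fixes u v :: "'a::metric_space"
  assumes "dist u v \<le> pi / 2"
  shows "0 \<le> cos (dist u v)"
  using assms by (intro cos_ge_zero) (auto intro: order_trans[of _ 0])

lemma cos_dist_pos:
  fixes u v :: "'a::metric_space"
  assumes "dist u v < pi / 2"
  shows "0 < cos (dist u v)"
  using assms by (intro cos_gt_zero_pi) (auto intro: less_le_trans[of _ 0])

lemma firmly_vicinal_imp_vicinal:
  fixes T :: "'a::metric_space \<Rightarrow> 'a"
  assumes "\<forall>v v' :: 'a. dist v v' \<le> pi / 2" and "firmly_vicinal T"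
  shows "vicinal T"
  unfolding vicinal_def
proof (intro allI)
  fix x y
  show "((Cd T x)^2 * (1 + (Cd T y)^2) + (Cd T y)^2 * (1 + (Cd T x)^2)) * cos (dist (T x) (T y))
          \<ge> (Cd T x)^2 * (1 + (Cd T y)^2) * cos (dist (T x) y)
            + (Cd T y)^2 * (1 + (Cd T x)^2) * cos (dist (T y) x)"
    using assms(2)[unfolded firmly_vicinal_def, rule_format, of x y] assms(1)
    by (intro weighted_ineq_weaken) (simp_all add: Cd_def cos_dist_nonneg)
qed

lemma firmly_vicinal_imp_firmly_spherically_nonspreading:
  fixes T :: "'a::metric_space \<Rightarrow> 'a"
  assumes "\<forall>v v' :: 'a. dist v v' < pi / 2" and "firmly_vicinal T"
  shows "firmly_spherically_nonspreading T"
  unfolding firmly_spherically_nonspreading_def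
proof (intro allI)
  fix x y
  show "(Cd T x + Cd T y) * (cos (dist (T x) (T y)))^2
          \<ge> 2 * cos (dist (T x) y) * cos (dist (T y) x)"
    using assms(2)[unfolded firmly_vicinal_def, rule_format, of x y] assms(1)
    by (intro weighted_ineq_imp_nonspreading_ineq)
       (simp_all add: Cd_def cos_dist_pos less_imp_le)
qed

lemma firmly_vicinal_fixpoint_ineq:
  fixes T :: "'a::metric_space \<Rightarrow> 'a"
  assumes "firmly_vicinal T" and "y \<in> Fix T"
  shows "cos (dist (T x) x) * cos (dist (T x) y) \<ge> cos (dist x y)"
proof -
  define a where "a = cos (dist (T x) x)"
  have "T y = y"
    using assms(2) by (simp add: Fix_def)
  then have "(a^2 * 2 + (1 + a^2) * a) * cos (dist (T x) y)
               \<ge> a^2 * 2 * cos (dist (T x) y) + (1 + a^2) * cos (dist y x)"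
    using assms(1)[unfolded firmly_vicinal_def, rule_format, of x y]
    by (simp add: Cd_def a_def)
  then have "(1 + a^2) * (a * cos (dist (T x) y)) \<ge> (1 + a^2) * cos (dist x y)"
    by (simp add: algebra_simps dist_commute)
  then show ?thesis
    by (simp add: a_def mult_le_cancel_left add_pos_nonneg)
qed

lemma vicinal_fixpoint_ineq:
  fixes T :: "'a::metric_space \<Rightarrow> 'a"
  assumes "vicinal T" and "y \<in> Fix T"
  shows "cos (dist (T x) y) \<ge> cos (dist x y)"
proof -
  define a where "a = cos (dist (T x) x)"
  have "T y = y"
    using assms(2) by (simp add: Fix_def)
  then have "(a^2 * 2 + (1 + a^2)) * cos (dist (T x) y)
               \<ge> a^2 * 2 * cos (dist (T x) y) + (1 + a^2) * cos (dist y x)"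
    using assms(1)[unfolded vicinal_def, rule_format, of x y]
    by (simp add: Cd_def a_def)
  then have "(1 + a^2) * cos (dist (T x) y) \<ge> (1 + a^2) * cos (dist x y)"
    by (simp add: algebra_simps dist_commute)
  then show ?thesis
    by (simp add: mult_le_cancel_left add_pos_nonneg)
qed

lemma vicinal_imp_quasi_nonexpansive:
  fixes T :: "'a::metric_space \<Rightarrow> 'a"
  assumes "\<forall>v v' :: 'a. dist v v' \<le> pi" and "vicinal T" and "Fix T \<noteq> {}"
  shows "quasi_nonexpansive T"
  using assms vicinal_fixpoint_ineq[OF assms(2)]
  by (auto simp: quasi_nonexpansive_def cos_mono_le_eq)

lemma factor_tendsto_one_if_increasing_product:
  fixes s c :: "nat \<Rightarrow> real"
  assumes pos: "\<And>n. 0 < s n" and s_le: "\<And>n. s n \<le> 1" and c_le: "\<And>n. c n \<le> 1"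
    and step: "\<And>n. s n \<le> c n * s (Suc n)"
  shows "c \<longlonglongrightarrow> 1"
proof -
  have "incseq s"
  proof (rule incseq_SucI)
    fix n
    have "c n * s (Suc n) \<le> s (Suc n)"
      using c_le pos by (simp add: mult_left_le_one_le less_imp_le)
    with step show "s n \<le> s (Suc n)"
      by (meson order_trans)
  qed
  then obtain L where L: "s \<longlonglongrightarrow> L" and "\<forall>n. s n \<le> L"
    using incseq_convergent[of s 1] s_le by blast
  then have "L > 0"
    using pos[of 0] by (meson less_le_trans)
  then have ratio: "(\<lambda>n. s n / s (Suc n)) \<longlonglongrightarrow> 1"
    using tendsto_divide[OF L LIMSEQ_Suc[OF L]] by simp
  have "s n / s (Suc n) \<le> c n" for n
    using step[of n] pos[of "Suc n"] by (simp add: divide_le_eq)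
  then show ?thesis
    by (intro tendsto_sandwich[OF _ _ ratio tendsto_const[of 1]]) (simp_all add: c_le)
qed

lemma tendsto_zero_if_cos_tendsto_one:
  fixes d :: "nat \<Rightarrow> real"
  assumes "\<And>n. 0 \<le> d n" "\<And>n. d n \<le> pi" and "(\<lambda>n. cos (d n)) \<longlonglongrightarrow> 1"
  shows "d \<longlonglongrightarrow> 0"
proof -
  have "(\<lambda>n. arccos (cos (d n))) \<longlonglongrightarrow> arccos 1"
    using assms(3) by (rule continuous_on_tendsto_compose[OF continuous_on_arccos']) auto
  then show ?thesis
    using assms(1,2) by (simp add: arccos_cos)
qed

lemma firmly_vicinal_asymptotically_regular:
  fixes T :: "'a::metric_space \<Rightarrow> 'a"
  assumes diam: "\<forall>v v' :: 'a. dist v v' < pi / 2"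
    and "firmly_vicinal T" and "Fix T \<noteq> {}"
  shows "asymptotically_regular T"
  unfolding asymptotically_regular_def
proof
  fix x
  obtain y where "y \<in> Fix T"
    using assms(3) by auto
  let ?d = "\<lambda>n. dist ((T ^^ Suc n) x) ((T ^^ n) x)"
  have "(\<lambda>n. cos (?d n)) \<longlonglongrightarrow> 1"
    using firmly_vicinal_fixpoint_ineq[OF assms(2) \<open>y \<in> Fix T\<close>] diam
    by (intro factor_tendsto_one_if_increasing_product[where s = "\<lambda>n. cos (dist ((T ^^ n) x) y)"])
       (simp_all add: cos_dist_pos)
  moreover have "?d n \<le> pi" for n
    using diam[rule_format, of "(T ^^ Suc n) x" "(T ^^ n) x"] pi_gt_zero by linarith
  ultimately show "?d \<longlonglongrightarrow> 0"
    by (intro tendsto_zero_if_cos_tendsto_one) simp_all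
qed

theorem lemma3p2:
  fixes T :: "'a::metric_space \<Rightarrow> 'a"
  assumes diam: "\<forall>v v' :: 'a. dist v v' \<le> pi / 2"
  shows "(firmly_vicinal T \<longrightarrow> vicinal T)
    \<and> (firmly_vicinal T \<and> (\<forall>v v' :: 'a. dist v v' < pi / 2) \<longrightarrow> firmly_spherically_nonspreading T)
    \<and> (firmly_vicinal T \<and> Fix T \<noteq> {} \<longrightarrow>
         (\<forall>x y. y \<in> Fix T \<longrightarrow> cos (dist (T x) x) * cos (dist (T x) y) \<ge> cos (dist x y)))
    \<and> (vicinal T \<and> Fix T \<noteq> {} \<longrightarrow> quasi_nonexpansive T)
    \<and> ((\<forall>v v' :: 'a. dist v v' < pi / 2) \<and> firmly_vicinal T \<and> Fix T \<noteq> {} \<longrightarrow> asymptotically_regular T)"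
proof -
  have "dist v v' \<le> pi" for v v' :: 'a
    using diam[rule_format, of v v'] pi_gt_zero by linarith
  then have "\<forall>v v' :: 'a. dist v v' \<le> pi"
    by blast
  then show ?thesis
    by (auto intro: firmly_vicinal_imp_vicinal[OF diam]
        firmly_vicinal_imp_firmly_spherically_nonspreading
        firmly_vicinal_fixpoint_ineq vicinal_imp_quasi_nonexpansive
        firmly_vicinal_asymptotically_regular)
qed

end
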